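(* Let $G=(V,E,w)$ be an undirected graph with positive real edge weights, $s\in V$, let $T$ be a shortest-path tree of $G$ rooted at $s$ and $w'$ as in the context. Let $F\subseteq E$, let $t\in V$ be reachable from $s$ in $G-F$, let $\pi$ be a shortest path from $s$ to $t$ in $G-F$, and let $N$ be the set of new edges of $\pi$. Then for every $e\in N$, $w'(e)\le 2\,d_{G-F}(t)$.
   Context: For a subgraph $X$ of $G$, $d_X(u)$ denotes the distance from $s$ to $u$ in $X$ with respect to $w$. Define $w'(u,v)=0$ if $(u,v)\in E(T)$ and $w'(u,v)=d_T(u)+w(u,v)+d_T(v)$ otherwise. $G-F$ and $T-F$ denote $G$ and $T$ with the edges of $F$ removed. An edge is called new if its endpoints lie in different connected components of the forest $T-F$. *)

theory Defs
  imports Complex_Main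
begin

text \<open>Subgraphs are given by edge subsets X of E
  (on the full vertex set V).\<close>

definition ugraph :: "'v set \<Rightarrow> 'v set set \<Rightarrow> bool" where
  "ugraph V E \<longleftrightarrow> finite V \<and> (\<forall>e\<in>E. e \<subseteq> V \<and> card e = 2)"

definition walk :: "'v set \<Rightarrow> 'v set set \<Rightarrow> 'v list \<Rightarrow> bool" where
  "walk V X p \<longleftrightarrow> p \<noteq> [] \<and> set p \<subseteq> V \<and>
     (\<forall>i. Suc i < length p \<longrightarrow> {p ! i, p ! Suc i} \<in> X)"

definition path :: "'v set \<Rightarrow> 'v set set \<Rightarrow> 'v list \<Rightarrow> bool" where
  "path V X p \<longleftrightarrow> walk V X p \<and> distinct p"

definition walk_edges :: "'v list \<Rightarrow> 'v set set" where
  "walk_edges p = {{p ! i, p ! Suc i} | i. Suc i < length p}"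

definition walk_weight :: "('v set \<Rightarrow> real) \<Rightarrow> 'v list \<Rightarrow> real" where
  "walk_weight w p = (\<Sum>i<length p - 1. w {p ! i, p ! Suc i})"

definition reachable :: "'v set \<Rightarrow> 'v set set \<Rightarrow> 'v \<Rightarrow> 'v \<Rightarrow> bool" where
  "reachable V X u v \<longleftrightarrow> (\<exists>p. walk V X p \<and> hd p = u \<and> last p = v)"

definition dist :: "'v set \<Rightarrow> 'v set set \<Rightarrow> ('v set \<Rightarrow> real) \<Rightarrow> 'v \<Rightarrow> 'v \<Rightarrow> real" where
  "dist V X w s u = Inf {walk_weight w p | p. walk V X p \<and> hd p = s \<and> last p = u}"

definition shortest_path :: "'v set \<Rightarrow> 'v set set \<Rightarrow> ('v set \<Rightarrow> real) \<Rightarrow> 'v \<Rightarrow> 'v \<Rightarrow> 'v list \<Rightarrow> bool" where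
  "shortest_path V X w s t p \<longleftrightarrow> path V X p \<and> hd p = s \<and> last p = t \<and>
     walk_weight w p = dist V X w s t"

text \<open>T \<subseteq> E is a tree spanning the vertices reachable from s: connected on them, and
  minimally so (removing any edge disconnects its endpoints, i.e. acyclic).\<close>
definition shortest_path_tree :: "'v set \<Rightarrow> 'v set set \<Rightarrow> ('v set \<Rightarrow> real) \<Rightarrow> 'v \<Rightarrow> 'v set set \<Rightarrow> bool" where
  "shortest_path_tree V E w s T \<longleftrightarrow> s \<in> V \<and> T \<subseteq> E \<and>
     (\<forall>u\<in>V. reachable V E s u \<longleftrightarrow> reachable V T s u) \<and>
     (\<forall>e\<in>T. \<forall>u\<in>e. reachable V T s u) \<and>
     (\<forall>e\<in>T. \<forall>u v. e = {u, v} \<longrightarrow> \<not> reachable V (T - {e}) u v) \<and>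
     (\<forall>u\<in>V. reachable V E s u \<longrightarrow> dist V T w s u = dist V E w s u)"

definition w' :: "'v set \<Rightarrow> 'v set set \<Rightarrow> ('v set \<Rightarrow> real) \<Rightarrow> 'v \<Rightarrow> 'v \<Rightarrow> 'v \<Rightarrow> real" where
  "w' V T w s u v = (if {u, v} \<in> T then 0 else dist V T w s u + w {u, v} + dist V T w s v)"

definition new_edge :: "'v set \<Rightarrow> 'v set set \<Rightarrow> 'v set set \<Rightarrow> 'v \<Rightarrow> 'v \<Rightarrow> bool" where
  "new_edge V T F u v \<longleftrightarrow> \<not> reachable V (T - F) u v"

end

theory Submission
  imports Defs
begin

text \<open>Every vertex x on a shortest path \<pi> of G - F lies at \<pi>-prefix distance at least
  d_G(x) = d_T(x) from s.  Hence for an edge {x, y} of \<pi>, with y after x,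
  w'(x, y) \<le> d_T(x) + w(x, y) + d_T(y) \<le> 2 \<cdot> (length of the prefix ending in y) \<le> 2 d_{G-F}(t).
  The edge need not be new for this bound.\<close>

lemma walk_mono: "walk V X p \<Longrightarrow> X \<subseteq> Y \<Longrightarrow> walk V Y p"
  unfolding walk_def by blast

lemma walk_edge_nonneg:
  assumes "walk V X p" "\<forall>e\<in>X. w e \<ge> 0" "Suc i < length p"
  shows "w {p ! i, p ! Suc i} \<ge> 0"
  using assms unfolding walk_def by blast

lemma walk_weight_nonneg:
  assumes "walk V X p" "\<forall>e\<in>X. w e \<ge> 0"
  shows "walk_weight w p \<ge> 0"
  unfolding walk_weight_def using walk_edge_nonneg[OF assms] by (intro sum_nonneg) auto

lemma dist_le_walk_weight:
  assumes "walk V X p" "hd p = s" "last p = u" "\<forall>e\<in>X. w e \<ge> 0"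
  shows "dist V X w s u \<le> walk_weight w p"
  unfolding dist_def
proof (rule cInf_lower)
  show "walk_weight w p \<in> {walk_weight w p |p. walk V X p \<and> hd p = s \<and> last p = u}"
    using assms by blast
  show "bdd_below {walk_weight w p |p. walk V X p \<and> hd p = s \<and> last p = u}"
    unfolding bdd_below_def using walk_weight_nonneg assms(4) by blast
qed

lemma walk_take:
  assumes "walk V X p" "k < length p"
  shows "walk V X (take (Suc k) p)"
  using assms unfolding walk_def by (auto dest: in_set_takeD)

lemma last_take_Suc: "k < length p \<Longrightarrow> last (take (Suc k) p) = p ! k"
  by (subst last_conv_nth) (auto simp: min_def intro: arg_cong[where f="(!) p"])

lemma walk_weight_take:
  "k < length p \<Longrightarrow> walk_weight w (take (Suc k) p) = (\<Sum>j<k. w {p ! j, p ! Suc j})"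
  unfolding walk_weight_def by (intro sum.cong) auto

lemma walk_weight_take_Suc:
  "Suc k < length p \<Longrightarrow>
     walk_weight w (take (Suc (Suc k)) p) = walk_weight w (take (Suc k) p) + w {p ! k, p ! Suc k}"
  by (simp add: walk_weight_take)

lemma walk_weight_take_le:
  assumes "walk V X p" "\<forall>e\<in>X. w e \<ge> 0" "k < length p"
  shows "walk_weight w (take (Suc k) p) \<le> walk_weight w p"
proof -
  have "walk_weight w (take (Suc k) p) = (\<Sum>j<k. w {p ! j, p ! Suc j})"
    using assms(3) by (rule walk_weight_take)
  also have "\<dots> \<le> (\<Sum>j<length p - 1. w {p ! j, p ! Suc j})"
    using assms walk_edge_nonneg[OF assms(1,2)] by (intro sum_mono2) auto
  finally show ?thesis unfolding walk_weight_def .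
qed

lemma dist_le_walk_prefix:
  assumes "walk V X p" "hd p = s" "\<forall>e\<in>X. w e \<ge> 0" "k < length p"
  shows "dist V X w s (p ! k) \<le> walk_weight w (take (Suc k) p)"
  using assms walk_take[OF assms(1,4)] last_take_Suc[OF assms(4)]
  by (intro dist_le_walk_weight) (auto simp: hd_take)

lemma shortest_path_tree_dist_le_walk_prefix:
  assumes "shortest_path_tree V E w s T" "\<forall>e\<in>E. w e \<ge> 0"
    and "walk V E p" "hd p = s" "k < length p"
  shows "dist V T w s (p ! k) \<le> walk_weight w (take (Suc k) p)"
proof -
  have "p ! k \<in> V" using assms(3,5) unfolding walk_def by auto
  moreover have "reachable V E s (p ! k)"
    unfolding reachable_def using assms(3-5) walk_take last_take_Suc
    by (metis hd_take zero_less_Suc)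
  ultimately have "dist V T w s (p ! k) = dist V E w s (p ! k)"
    using assms(1) unfolding shortest_path_tree_def by blast
  also have "\<dots> \<le> walk_weight w (take (Suc k) p)"
    by (rule dist_le_walk_prefix[OF assms(3,4,2,5)])
  finally show ?thesis .
qed

lemma w'_commute: "w' V T w s u v = w' V T w s v u"
  unfolding w'_def by (simp add: insert_commute)

lemma w'_le: "w' V T w s u v \<le> max 0 (dist V T w s u + w {u, v} + dist V T w s v)"
  unfolding w'_def by auto

theorem lemma4:
  fixes V :: "'v set" and E F T :: "'v set set" and w :: "'v set \<Rightarrow> real"
    and s t :: 'v and \<pi> :: "'v list"
  assumes "ugraph V E"
    and "\<forall>e\<in>E. w e > 0"
    and "shortest_path_tree V E w s T"
    and "F \<subseteq> E"
    and "t \<in> V"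
    and "reachable V (E - F) s t"
    and "shortest_path V (E - F) w s t \<pi>"
  shows "\<forall>u v. {u, v} \<in> walk_edges \<pi> \<and> new_edge V T F u v \<longrightarrow>
           w' V T w s u v \<le> 2 * dist V (E - F) w s t"
proof (intro allI impI)
  fix u v assume "{u, v} \<in> walk_edges \<pi> \<and> new_edge V T F u v"
  then obtain i where i: "Suc i < length \<pi>" "{u, v} = {\<pi> ! i, \<pi> ! Suc i}"
    unfolding walk_edges_def by auto
  have w_nonneg: "\<forall>e\<in>E. w e \<ge> 0" using assms(2) by auto
  have \<pi>: "walk V E \<pi>" "hd \<pi> = s" "walk_weight w \<pi> = dist V (E - F) w s t"
    using assms(7) walk_mono unfolding shortest_path_def path_def by auto
  define P where "P k = walk_weight w (take (Suc k) \<pi>)" for k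
  have dist_T: "dist V T w s (\<pi> ! k) \<le> P k" if "k < length \<pi>" for k
    unfolding P_def using shortest_path_tree_dist_le_walk_prefix[OF assms(3) w_nonneg \<pi>(1,2) that] .
  have "w' V T w s u v = w' V T w s (\<pi> ! i) (\<pi> ! Suc i)"
    using i(2) w'_commute by (metis doubleton_eq_iff)
  also have "\<dots> \<le> max 0 (P i + w {\<pi> ! i, \<pi> ! Suc i} + P (Suc i))"
    using w'_le dist_T[of i] dist_T[of "Suc i"] i(1) by (smt (verit) Suc_lessD)
  also have "\<dots> = 2 * P (Suc i)"
    using walk_weight_take_Suc[OF i(1)] walk_weight_nonneg[OF walk_take[OF \<pi>(1) i(1)] w_nonneg]
    unfolding P_def by simp
  also have "\<dots> \<le> 2 * dist V (E - F) w s t"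
    using walk_weight_take_le[OF \<pi>(1) w_nonneg i(1)] \<pi>(3) unfolding P_def by simp
  finally show "w' V T w s u v \<le> 2 * dist V (E - F) w s t" .
qed

end
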